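(* Let $p,q$ be positive integers and let $\Phi:U_{pq}(\mathbb{C})\to\mathbb{C}^{q\times p}$ be given by $\Phi\binom{Z_0}{Z_1}=Z_1Z_0^{-1}$, where $Z_0\in\mathbb{C}^{p\times p}$, $Z_1\in\mathbb{C}^{q\times p}$. Then the complex valued components of $\Phi$ form an orthogonal harmonic family of $\mathbf{GL}_p(\mathbb{C})$-invariant functions on $U_{pq}(\mathbb{C})$, equipped with the semi-Euclidean metric.
   Context: $U_{pq}(\mathbb{C})=\{\binom{Z_0}{Z_1}\in\mathbb{C}^{(p+q)\times p}: -Z_0^*Z_0+Z_1^*Z_1<0\}$ (negative definite), on which $Z_0$ is invertible; $\mathbf{GL}_p(\mathbb{C})$ acts by right multiplication. The semi-Euclidean metric is $(X,Y)=\mathfrak{Re}\,\mathrm{trace}(X^*\mathrm{diag}(-I_p,I_q)Y)$. For a semi-Riemannian manifold $(M,g)$ and complex functions $\phi,\psi$, let $\tau(\phi)$ be the (complex-linear) Laplace–Beltrami operator and $\kappa(\phi,\psi)=g(\mathrm{grad}\,\phi,\mathrm{grad}\,\psi)$ with $g$ extended complex-bilinearly. Explicitly here, with entries $z_{kl}$: $\tau(\phi)=-4\sum_{k,l=1}^p\frac{\partial^2\phi}{\partial z_{kl}\partial\bar z_{kl}}+4\sum_{k=p+1}^{p+q}\sum_{l=1}^p\frac{\partial^2\phi}{\partial z_{kl}\partial\bar z_{kl}}$ and $\kappa(\phi,\psi)=-2\sum_{k,l=1}^p(\frac{\partial\phi}{\partial z_{kl}}\frac{\partial\psi}{\partial\bar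 z_{kl}}+\frac{\partial\phi}{\partial\bar z_{kl}}\frac{\partial\psi}{\partial z_{kl}})+2\sum_{k=p+1}^{p+q}\sum_{l=1}^p(\frac{\partial\phi}{\partial z_{kl}}\frac{\partial\psi}{\partial\bar z_{kl}}+\frac{\partial\phi}{\partial\bar z_{kl}}\frac{\partial\psi}{\partial z_{kl}})$. A set $\Omega$ of complex functions on $M$ is an orthogonal harmonic family if $\tau(\phi)=0$ and $\kappa(\phi,\psi)=0$ for all $\phi,\psi\in\Omega$. *)

theory Defs
  imports "HOL-Analysis.Analysis"
begin

text \<open>A point of \<open>\<complex>^((p+q)\<times>p)\<close> is a matrix \<open>Z :: complex^'p^('p+'q)\<close>;
  rows \<open>Inl k\<close> (k = 1..p) form the block Z0, rows \<open>Inr k\<close> (k = p+1..p+q) form Z1.\<close>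

definition cadj :: "complex^'n^'m \<Rightarrow> complex^'m^'n" where
  "cadj A = (\<chi> i j. cnj (A $ j $ i))"

definition upper_block :: "complex^'p^('p::finite + 'q::finite) \<Rightarrow> complex^'p^'p" where
  "upper_block Z = (\<chi> i j. Z $ Inl i $ j)"

definition lower_block :: "complex^'p^('p::finite + 'q::finite) \<Rightarrow> complex^'p^'q" where
  "lower_block Z = (\<chi> i j. Z $ Inr i $ j)"

definition neg_definite :: "complex^'n^'n \<Rightarrow> bool" where
  "neg_definite M \<longleftrightarrow> (\<forall>v::complex^'n. v \<noteq> 0 \<longrightarrow>
      (\<Sum>i\<in>UNIV. cnj (v $ i) * (M *v v) $ i) \<in> \<real> \<and>
      Re (\<Sum>i\<in>UNIV. cnj (v $ i) * (M *v v) $ i) < 0)"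

definition U_pq :: "(complex^'p^('p::finite + 'q::finite)) set" where
  "U_pq = {Z. neg_definite (- (cadj (upper_block Z) ** upper_block Z)
                             + cadj (lower_block Z) ** lower_block Z)}"

definition Phi :: "complex^'p^('p::finite + 'q::finite) \<Rightarrow> complex^'p^'q" where
  "Phi Z = lower_block Z ** matrix_inv (upper_block Z)"

definition dirE :: "'r \<Rightarrow> 'c \<Rightarrow> complex \<Rightarrow> complex^'c^'r" where
  "dirE k l c = (\<chi> i j. if i = k \<and> j = l then c else 0)"

definition pd_re :: "(complex^'c^'r \<Rightarrow> complex) \<Rightarrow> 'r \<Rightarrow> 'c \<Rightarrow> complex^'c^'r \<Rightarrow> complex" where
  "pd_re f k l Z = vector_derivative (\<lambda>t::real. f (Z + dirE k l (complex_of_real t))) (at 0)"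

definition pd_im :: "(complex^'c^'r \<Rightarrow> complex) \<Rightarrow> 'r \<Rightarrow> 'c \<Rightarrow> complex^'c^'r \<Rightarrow> complex" where
  "pd_im f k l Z = vector_derivative (\<lambda>t::real. f (Z + dirE k l (\<i> * complex_of_real t))) (at 0)"

definition wz :: "(complex^'c^'r \<Rightarrow> complex) \<Rightarrow> 'r \<Rightarrow> 'c \<Rightarrow> complex^'c^'r \<Rightarrow> complex" where
  "wz f k l Z = (pd_re f k l Z - \<i> * pd_im f k l Z) / 2"

definition wzbar :: "(complex^'c^'r \<Rightarrow> complex) \<Rightarrow> 'r \<Rightarrow> 'c \<Rightarrow> complex^'c^'r \<Rightarrow> complex" where
  "wzbar f k l Z = (pd_re f k l Z + \<i> * pd_im f k l Z) / 2"

text \<open>Sign of the metric diag(-I_p, I_q) on row k.\<close>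
fun row_sign :: "'p::finite + 'q::finite \<Rightarrow> complex" where
  "row_sign (Inl _) = -1"
| "row_sign (Inr _) = 1"

definition tension :: "(complex^'p^('p::finite + 'q::finite) \<Rightarrow> complex) \<Rightarrow> complex^'p^('p::finite + 'q::finite) \<Rightarrow> complex" where
  "tension f Z = (\<Sum>k\<in>UNIV. \<Sum>l\<in>UNIV. 4 * row_sign k * wz (wzbar f k l) k l Z)"

definition conformality ::
  "(complex^'p^('p::finite + 'q::finite) \<Rightarrow> complex) \<Rightarrow> (complex^'p^('p::finite + 'q::finite) \<Rightarrow> complex) \<Rightarrow> complex^'p^('p::finite + 'q::finite) \<Rightarrow> complex" where
  "conformality f g Z = (\<Sum>k\<in>UNIV. \<Sum>l\<in>UNIV.
      2 * row_sign k * (wz f k l Z * wzbar g k l Z + wzbar f k l Z * wz g k l Z))"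

definition orthogonal_harmonic_family ::
  "(complex^'p^('p::finite + 'q::finite)) set \<Rightarrow> (complex^'p^('p::finite + 'q::finite) \<Rightarrow> complex) set \<Rightarrow> bool" where
  "orthogonal_harmonic_family M \<Omega> \<longleftrightarrow>
     (\<forall>\<phi>\<in>\<Omega>. \<forall>Z\<in>M. tension \<phi> Z = 0) \<and>
     (\<forall>\<phi>\<in>\<Omega>. \<forall>\<psi>\<in>\<Omega>. \<forall>Z\<in>M. conformality \<phi> \<psi> Z = 0)"

end

theory Submission
  imports Defs
begin

text \<open>By Cramer's rule every entry of \<open>Z\<^sub>1 Z\<^sub>0\<^sup>-\<^sup>1\<close> is a rational function of
  the entries of \<open>Z\<close>, so along each complex coordinate line it is holomorphic wherever
  \<open>det Z\<^sub>0 \<noteq> 0\<close>, an open condition. The Wirtinger derivatives only see such lines, hence all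
  \<open>\<partial>/\<partial>zbar\<close> derivatives of the components vanish on that open set, and so do their
  \<open>\<partial>/\<partial>z\<close> derivatives: \<open>\<tau> = 0\<close>, and \<open>\<kappa> = 0\<close> because each of its terms has a
  \<open>\<partial>/\<partial>zbar\<close> factor. On \<open>U\<^sub>p\<^sub>q\<close> the block \<open>Z\<^sub>0\<close> is injective, since \<open>Z\<^sub>0 v = 0\<close> makes
  \<open>v\<^sup>* (-Z\<^sub>0\<^sup>*Z\<^sub>0 + Z\<^sub>1\<^sup>*Z\<^sub>1) v = |Z\<^sub>1 v|\<^sup>2 \<ge> 0\<close>. Invariance is
  \<open>(Z\<^sub>1 g)(Z\<^sub>0 g)\<^sup>-\<^sup>1 = Z\<^sub>1 Z\<^sub>0\<^sup>-\<^sup>1\<close>.\<close>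

lemma matrix_inv_right:
  fixes A :: "'a::semiring_1^'n^'m"
  assumes "invertible A"
  shows "A ** matrix_inv A = mat 1"
  using assms unfolding invertible_def matrix_inv_def by (rule someI_ex[THEN conjunct1])

lemma matrix_inv_unique:
  fixes A X :: "'a::field^'n^'n"
  assumes "A ** X = mat 1"
  shows "matrix_inv A = X"
proof -
  have "invertible A"
    using assms invertible_right_inverse by blast
  then have "matrix_inv A = (X ** A) ** matrix_inv A"
    using assms matrix_left_right_inverse by (metis matrix_mul_lid)
  also have "\<dots> = X"
    using matrix_inv_right[OF \<open>invertible A\<close>] by (simp add: matrix_mul_assoc[symmetric])
  finally show ?thesis .
qed

lemma matrix_inv_mult:
  fixes A B :: "'a::field^'n^'n"
  assumes "invertible A" "invertible B"
  shows "matrix_inv (A ** B) = matrix_inv B ** matrix_inv A"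
proof (rule matrix_inv_unique)
  show "(A ** B) ** (matrix_inv B ** matrix_inv A) = mat 1"
    using matrix_inv_right[OF assms(1)] matrix_inv_right[OF assms(2)]
    by (metis matrix_mul_assoc matrix_mul_rid)
qed

lemma matrix_inv_entry_cramer:
  fixes A :: "'a::field^'n^'n"
  assumes "det A \<noteq> 0"
  shows "matrix_inv A $ i $ j = det (\<chi> r s. if s = i then (if r = j then 1 else 0) else A $ r $ s) / det A"
proof -
  define x where "x = (\<chi> m. matrix_inv A $ m $ j)"
  define e :: "'a^'n" where "e = (\<chi> r. if r = j then 1 else 0)"
  have "A *v x = e"
    using matrix_inv_right[of A] assms
    by (simp add: invertible_det_nz x_def e_def vec_eq_iff matrix_vector_mult_def matrix_matrix_mult_def mat_def)
  then have "x $ i = det (\<chi> r s. if s = i then e $ r else A $ r $ s) / det A"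
    using cramer[OF assms] by simp
  then show ?thesis
    by (simp add: x_def e_def cong: if_cong)
qed

lemma holomorphic_on_det:
  fixes F :: "complex \<Rightarrow> complex^'n^'n"
  assumes "\<And>i j. (\<lambda>c. F c $ i $ j) holomorphic_on S"
  shows "(\<lambda>c. det (F c)) holomorphic_on S"
  unfolding det_def by (intro holomorphic_intros assms)

lemma holomorphic_on_matrix_inv_entry:
  fixes F :: "complex \<Rightarrow> complex^'n^'n"
  assumes "\<And>i j. (\<lambda>c. F c $ i $ j) holomorphic_on S" and "\<And>c. c \<in> S \<Longrightarrow> det (F c) \<noteq> 0"
  shows "(\<lambda>c. matrix_inv (F c) $ i $ j) holomorphic_on S"
proof -
  have "(\<lambda>c. det (\<chi> r s. if s = i then (if r = j then 1 else 0) else F c $ r $ s) / det (F c))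
          holomorphic_on S"
  proof (intro holomorphic_intros holomorphic_on_det)
    fix r s
    show "(\<lambda>c. (\<chi> r s. if s = i then (if r = j then 1 else 0) else F c $ r $ s) $ r $ s) holomorphic_on S"
      using assms(1) by (cases "s = i") auto
  qed (use assms in auto)
  then show ?thesis
    by (rule holomorphic_transform) (simp add: matrix_inv_entry_cramer assms(2))
qed

lemma vector_derivative_real_line:
  fixes g h :: "complex \<Rightarrow> complex"
  assumes "open T" "0 \<in> T" "\<And>c. c \<in> T \<Longrightarrow> g c = h c" "(h has_field_derivative b) (at 0)"
  shows "vector_derivative (\<lambda>t::real. g (w * complex_of_real t)) (at 0) = w * b"
proof -
  have line: "((\<lambda>t::real. w * complex_of_real t) has_vector_derivative w) (at 0)"
    using has_vector_derivative_of_real[OF DERIV_ident, of "at 0"]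
    by (auto dest: has_vector_derivative_mult_right[of _ _ _ w])
  have "((h \<circ> (\<lambda>t. w * complex_of_real t)) has_vector_derivative w * b) (at 0)"
    using field_vector_diff_chain_at[OF line] assms(4) by simp
  moreover have "open ((\<lambda>t::real. w * complex_of_real t) -` T)"
    by (intro continuous_open_vimage assms(1) continuous_intros)
  ultimately have "((\<lambda>t::real. g (w * complex_of_real t)) has_vector_derivative w * b) (at 0)"
    by (rule has_vector_derivative_transform_within_open) (use assms(2,3) in auto)
  then show ?thesis
    by (rule vector_derivative_at)
qed

lemma wirtinger_holomorphic_line:
  assumes "open T" "0 \<in> T" "\<And>c. c \<in> T \<Longrightarrow> f (Z + dirE k l c) = h c"
    and "(h has_field_derivative b) (at 0)"
  shows "wz f k l Z = b" "wzbar f k l Z = 0"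
proof -
  have "pd_re f k l Z = b" "pd_im f k l Z = \<i> * b"
    unfolding pd_re_def pd_im_def
    using vector_derivative_real_line[OF assms, of 1] vector_derivative_real_line[OF assms, of \<i>]
    by simp_all
  then show "wz f k l Z = b" "wzbar f k l Z = 0"
    unfolding wz_def wzbar_def by (simp_all add: algebra_simps)
qed

lemma upper_block_nth: "upper_block Z $ i $ j = Z $ Inl i $ j"
  by (simp add: upper_block_def)

lemma lower_block_nth: "lower_block Z $ i $ j = Z $ Inr i $ j"
  by (simp add: lower_block_def)

lemma holomorphic_on_dirE: "(\<lambda>c. dirE k l c $ r $ s) holomorphic_on S"
  by (cases "r = k \<and> s = l") (auto simp: dirE_def intro!: holomorphic_intros)

lemma open_invertible_line: "open {c. det (upper_block (W + dirE k l c)) \<noteq> 0}"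
proof -
  have "(\<lambda>c. det (upper_block (W + dirE k l c))) holomorphic_on UNIV"
    by (auto simp: upper_block_nth holomorphic_on_dirE intro!: holomorphic_on_det holomorphic_intros)
  then show ?thesis
    by (intro open_Collect_neq holomorphic_on_imp_continuous_on) auto
qed

lemma holomorphic_on_Phi_line:
  "(\<lambda>c. Phi (W + dirE k l c) $ i $ j) holomorphic_on {c. det (upper_block (W + dirE k l c)) \<noteq> 0}"
  unfolding Phi_def matrix_matrix_mult_def
  by (auto simp: lower_block_nth upper_block_nth holomorphic_on_dirE
           intro!: holomorphic_intros holomorphic_on_matrix_inv_entry)

lemma wzbar_Phi:
  assumes "invertible (upper_block W)"
  shows "wzbar (\<lambda>Z. Phi Z $ i $ j) k l W = 0"
proof -
  let ?S = "{c. det (upper_block (W + dirE k l c)) \<noteq> 0}"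
  have "0 \<in> ?S"
    using assms by (simp add: invertible_det_nz dirE_def vec_eq_iff zero_vec_def[symmetric])
  then show ?thesis
    using holomorphic_derivI[OF holomorphic_on_Phi_line open_invertible_line]
    by (intro wirtinger_holomorphic_line(2)[OF open_invertible_line]) auto
qed

lemma wz_wzbar_Phi:
  assumes "invertible (upper_block W)"
  shows "wz (wzbar (\<lambda>Z. Phi Z $ i $ j) k l) k l W = 0"
proof -
  let ?S = "{c. det (upper_block (W + dirE k l c)) \<noteq> 0}"
  have "0 \<in> ?S"
    using assms by (simp add: invertible_det_nz dirE_def vec_eq_iff zero_vec_def[symmetric])
  moreover have "wzbar (\<lambda>Z. Phi Z $ i $ j) k l (W + dirE k l c) = 0" if "c \<in> ?S" for c
    using that by (intro wzbar_Phi) (simp add: invertible_det_nz)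
  ultimately show ?thesis
    by (intro wirtinger_holomorphic_line(1)[OF open_invertible_line, where h = "\<lambda>_. 0"]) auto
qed

lemma quadratic_form_cadj_mult:
  fixes L :: "complex^'n^'m" and v :: "complex^'n"
  shows "(\<Sum>i\<in>UNIV. cnj (v $ i) * ((cadj L ** L) *v v) $ i) = (\<Sum>m\<in>UNIV. cnj ((L *v v) $ m) * (L *v v) $ m)"
proof -
  define w where "w = L *v v"
  have "(\<Sum>i\<in>UNIV. cnj (v $ i) * ((cadj L ** L) *v v) $ i)
      = (\<Sum>i\<in>UNIV. \<Sum>m\<in>UNIV. cnj (v $ i) * cnj (L $ m $ i) * w $ m)"
    by (simp add: matrix_vector_mul_assoc[symmetric] w_def[symmetric])
       (simp add: matrix_vector_mult_def cadj_def sum_distrib_left mult_ac)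
  also have "\<dots> = (\<Sum>m\<in>UNIV. \<Sum>i\<in>UNIV. cnj (v $ i) * cnj (L $ m $ i) * w $ m)"
    by (rule sum.swap)
  also have "\<dots> = (\<Sum>m\<in>UNIV. cnj (w $ m) * w $ m)"
  proof -
    have "cnj (w $ m) = (\<Sum>i\<in>UNIV. cnj (v $ i) * cnj (L $ m $ i))" for m
      by (simp add: w_def matrix_vector_mult_def mult_ac)
    then show ?thesis
      by (simp only: sum_distrib_right)
  qed
  finally show ?thesis
    by (simp add: w_def)
qed

lemma invertible_upper_block_if_U_pq:
  assumes "Z \<in> U_pq"
  shows "invertible (upper_block Z)"
  unfolding invertible_left_inverse matrix_left_invertible_ker
proof (intro allI impI)
  fix v
  assume "upper_block Z *v v = 0"
  then have form: "(- (cadj (upper_block Z) ** upper_block Z) + cadj (lower_block Z) ** lower_block Z) *v v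
           = (cadj (lower_block Z) ** lower_block Z) *v v"
    by (simp add: matrix_vector_mult_diff_rdistrib matrix_vector_mul_assoc[symmetric])
  have nonneg: "Re (\<Sum>m\<in>UNIV. cnj ((lower_block Z *v v) $ m) * (lower_block Z *v v) $ m) \<ge> 0"
    by (simp add: Re_sum sum_nonneg)
  show "v = 0"
  proof (rule ccontr)
    assume "v \<noteq> 0"
    with assms have "Re (\<Sum>i\<in>UNIV. cnj (v $ i) * ((- (cadj (upper_block Z) ** upper_block Z)
                      + cadj (lower_block Z) ** lower_block Z) *v v) $ i) < 0"
      unfolding U_pq_def neg_definite_def by blast
    with nonneg show False
      unfolding form quadratic_form_cadj_mult by linarith
  qed
qed

lemma blocks_matrix_mult:
  "upper_block (Z ** g) = upper_block Z ** g" "lower_block (Z ** g) = lower_block Z ** g"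
  by (auto simp: vec_eq_iff upper_block_def lower_block_def matrix_matrix_mult_def)

lemma Phi_matrix_mult_right:
  assumes "invertible (upper_block Z)" "invertible g"
  shows "Phi (Z ** g) = Phi Z"
proof -
  have "lower_block Z ** g ** matrix_inv g = lower_block Z"
    using matrix_inv_right[OF assms(2)] by (metis matrix_mul_assoc matrix_mul_rid)
  then show ?thesis
    by (simp add: Phi_def blocks_matrix_mult matrix_inv_mult assms matrix_mul_assoc)
qed

theorem proposition4p1:
  fixes \<Omega> :: "(complex^'p^('p::finite + 'q::finite) \<Rightarrow> complex) set"
  defines "\<Omega> \<equiv> {(\<lambda>Z. Phi Z $ i $ j) | (i::'q::finite) (j::'p). True}"
  shows "orthogonal_harmonic_family (U_pq :: (complex^'p^('p::finite + 'q::finite)) set) \<Omega>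
         \<and> (\<forall>\<phi>\<in>\<Omega>. \<forall>Z\<in>(U_pq :: (complex^'p^('p::finite + 'q::finite)) set). \<forall>g :: complex^'p^'p.
               invertible g \<longrightarrow> \<phi> (Z ** g) = \<phi> Z)"
proof -
  have "tension (\<lambda>Z. Phi Z $ i $ j) Z = 0" if "Z \<in> U_pq" for i j and Z :: "complex^'p^('p + 'q)"
    unfolding tension_def by (simp add: wz_wzbar_Phi invertible_upper_block_if_U_pq[OF that])
  moreover have "conformality (\<lambda>Z. Phi Z $ i $ j) (\<lambda>Z. Phi Z $ i' $ j') Z = 0"
    if "Z \<in> U_pq" for i j i' j' and Z :: "complex^'p^('p + 'q)"
    unfolding conformality_def by (simp add: wzbar_Phi invertible_upper_block_if_U_pq[OF that])
  moreover have "Phi (Z ** g) = Phi Z" if "Z \<in> U_pq" "invertible g" for Z :: "complex^'p^('p + 'q)" and g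
    using Phi_matrix_mult_right invertible_upper_block_if_U_pq that by blast
  ultimately show ?thesis
    unfolding orthogonal_harmonic_family_def \<Omega>_def by auto
qed

end
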